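(* Assume the standing assumptions (A1)–(A3). Let \[ v^*_{IA}:=\min_{x,\lambda,Y}\ c^Tx+\lambda\ \ \text{s.t.}\ \ x\in\mathcal X,\ \ \lambda g_1g_1^T-\tfrac12G(x)+\tfrac12H(Y)\in\mathrm{IA}(\widehat{\mathcal U}\times\mathbb R^m_+), \] with $\lambda\in\mathbb R$, $Y\in\mathbb R^{n_2\times k}$. Then $v^*_{IA}=v^*_{Aff}$.
   Context: Data: $A\in\mathbb R^{m\times n_1}$, $B\in\mathbb R^{m\times n_2}$, $c\in\mathbb R^{n_1}$, $d\in\mathbb R^{n_2}$, $F\in\mathbb R^{m\times k}$, $\mathcal X\subseteq\mathbb R^{n_1}$ closed convex. $\widehat{\mathcal U}\subseteq\mathbb R_+\times\mathbb R^{k-1}$ closed, convex, full-dimensional cone, dual cone $\widehat{\mathcal U}^*$; $\mathcal U:=\{u\in\widehat{\mathcal U}:u_1=1\}$ nonempty compact. $e_1\in\mathbb R^k$ first basis vector, $g_1=(e_1;0)\in\mathbb R^{k+m}$. (RLP): $v^*_{RLP}:=\inf\{c^Tx+\sup_{u\in\mathcal U}d^Ty(u)\}$ over $x\in\mathcal X$, $y:\mathcal U\to\mathbb R^{n_2}$ with $Ax+By(u)\ge Fu\ \forall u\in\mathcal U$. (A1) $\mathcal X,\widehat{\mathcal U}$ tractable; (A2) (RLP) feasible; (A3) $v^*_{RLP}$ finite. $v^*_{Aff}:=\inf\{c^Tx+\sup_{u\in\mathcal U}d^TYu\}$ over $x\in\mathcal X$, $Y\in\mathbb R^{n_2\times k}$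 with $Ax+BYu\ge Fu\ \forall u\in\mathcal U$. $G(x):=\begin{pmatrix}0&(F-Axe_1^T)^T\\ F-Axe_1^T&0\end{pmatrix}$, $H(Y):=\begin{pmatrix}-e_1d^TY-Y^Tde_1^T&(BY)^T\\ BY&0\end{pmatrix}$. $\mathrm{IA}(\widehat{\mathcal U}\times\mathbb R^m_+):=\{S=\begin{pmatrix}S_{11}&S_{21}^T\\S_{21}&S_{22}\end{pmatrix}\in\mathcal S^{k+m}: S_{11}=e_1\alpha^T+\alpha e_1^T,\ \alpha\in\widehat{\mathcal U}^*,\ \text{each row of }S_{21}\text{ in }\widehat{\mathcal U}^*,\ S_{22}\ge0\text{ entrywise}\}$. *)

theory Defs
  imports "HOL-Analysis.Analysis"
begin

text \<open>Vectors/matrices are indexed by finite types: real^'n is R^n, and a matrix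
  M :: real^'c^'r has rows indexed by 'r and columns by 'c (entry M $ i $ j).
  The distinguished index i1 :: 'k plays the role of the first coordinate (e_1).\<close>

definition dual_cone :: "(real^'k) set \<Rightarrow> (real^'k) set" where
  "dual_cone K = {a. \<forall>u\<in>K. 0 \<le> a \<bullet> u}"

definition outer_vec :: "real^'r \<Rightarrow> real^'c \<Rightarrow> real^'c^'r" where
  "outer_vec a b = (\<chi> i j. a $ i * b $ j)"

definition unit_vec :: "'k::finite \<Rightarrow> real^'k" where
  "unit_vec i1 = (\<chi> j. if j = i1 then 1 else 0)"

definition Useg :: "'k::finite \<Rightarrow> (real^'k) set \<Rightarrow> (real^'k) set" where
  "Useg i1 Uhat = {u \<in> Uhat. u $ i1 = 1}"

definition v_RLP ::
  "'k::finite \<Rightarrow> real^'n1^'m \<Rightarrow> real^'n2^'m \<Rightarrow> real^'n1 \<Rightarrow> real^'n2 \<Rightarrow> real^'k^'m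
   \<Rightarrow> (real^'n1) set \<Rightarrow> (real^'k) set \<Rightarrow> ereal" where
  "v_RLP i1 A B c d F X Uhat =
     (INF p \<in> {(x, y). x \<in> X \<and> (\<forall>u\<in>Useg i1 Uhat. A *v x + B *v y u \<ge> F *v u)}.
        ereal (c \<bullet> fst p) + (SUP u \<in> Useg i1 Uhat. ereal (d \<bullet> snd p u)))"

definition RLP_feasible ::
  "'k::finite \<Rightarrow> real^'n1^'m \<Rightarrow> real^'n2^'m \<Rightarrow> real^'k^'m
   \<Rightarrow> (real^'n1) set \<Rightarrow> (real^'k) set \<Rightarrow> bool" where
  "RLP_feasible i1 A B F X Uhat =
     (\<exists>x\<in>X. \<exists>y::real^'k \<Rightarrow> real^'n2. \<forall>u\<in>Useg i1 Uhat. A *v x + B *v y u \<ge> F *v u)"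

definition v_Aff ::
  "'k::finite \<Rightarrow> real^'n1^'m \<Rightarrow> real^'n2^'m \<Rightarrow> real^'n1 \<Rightarrow> real^'n2 \<Rightarrow> real^'k^'m
   \<Rightarrow> (real^'n1) set \<Rightarrow> (real^'k) set \<Rightarrow> ereal" where
  "v_Aff i1 A B c d F X Uhat =
     (INF p \<in> {(x, Y::real^'k^'n2). x \<in> X \<and> (\<forall>u\<in>Useg i1 Uhat. A *v x + B *v (Y *v u) \<ge> F *v u)}.
        ereal (c \<bullet> fst p) + (SUP u \<in> Useg i1 Uhat. ereal (d \<bullet> (snd p *v u))))"

text \<open>(k+m)x(k+m) block matrices, indexed by the sum type 'k + 'm
  (Inl = first block of size k, Inr = second block of size m).\<close>

definition G_mat :: "'k::finite \<Rightarrow> real^'n1^'m \<Rightarrow> real^'k^'m \<Rightarrow> real^'n1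
   \<Rightarrow> real^('k + 'm::finite)^('k + 'm)" where
  "G_mat i1 A F x = (\<chi> p q. case (p, q) of
      (Inl i, Inl j) \<Rightarrow> 0
    | (Inl i, Inr r) \<Rightarrow> (F - outer_vec (A *v x) (unit_vec i1)) $ r $ i
    | (Inr r, Inl j) \<Rightarrow> (F - outer_vec (A *v x) (unit_vec i1)) $ r $ j
    | (Inr r, Inr s) \<Rightarrow> 0)"

definition H_mat :: "'k::finite \<Rightarrow> real^'n2^'m \<Rightarrow> real^'n2 \<Rightarrow> real^'k^'n2
   \<Rightarrow> real^('k + 'm::finite)^('k + 'm)" where
  "H_mat i1 B d Y = (\<chi> p q. case (p, q) of
      (Inl i, Inl j) \<Rightarrow> - (outer_vec (unit_vec i1) (d v* Y)) $ i $ j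
                        - (outer_vec (transpose Y *v d) (unit_vec i1)) $ i $ j
    | (Inl i, Inr r) \<Rightarrow> (B ** Y) $ r $ i
    | (Inr r, Inl j) \<Rightarrow> (B ** Y) $ r $ j
    | (Inr r, Inr s) \<Rightarrow> 0)"

text \<open>g_1 g_1^T with g_1 = (e_1; 0).\<close>
definition g1g1T :: "'k::finite \<Rightarrow> real^('k + 'm::finite)^('k + 'm)" where
  "g1g1T i1 = (\<chi> p q. if p = Inl i1 \<and> q = Inl i1 then 1 else 0)"

definition IA_set :: "'k::finite \<Rightarrow> (real^'k) set \<Rightarrow> (real^('k + 'm::finite)^('k + 'm)) set" where
  "IA_set i1 Uhat = {S. transpose S = S
      \<and> (\<exists>\<alpha>\<in>dual_cone Uhat. \<forall>i j. S $ Inl i $ Inl j =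
            (outer_vec (unit_vec i1) \<alpha> + outer_vec \<alpha> (unit_vec i1)) $ i $ j)
      \<and> (\<forall>r. (\<chi> j. S $ Inr r $ Inl j) \<in> dual_cone Uhat)
      \<and> (\<forall>r s. 0 \<le> S $ Inr r $ Inr s)}"

definition v_IA ::
  "'k::finite \<Rightarrow> real^'n1^'m \<Rightarrow> real^'n2^'m \<Rightarrow> real^'n1 \<Rightarrow> real^'n2 \<Rightarrow> real^'k^'m
   \<Rightarrow> (real^'n1) set \<Rightarrow> (real^'k) set \<Rightarrow> ereal" where
  "v_IA i1 A B c d F X Uhat =
     (INF p \<in> {(x, lam, Y::real^'k^'n2). x \<in> X \<and>
          lam *\<^sub>R g1g1T i1 - (1/2) *\<^sub>R G_mat i1 A F x + (1/2) *\<^sub>R H_mat i1 B d Y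
            \<in> (IA_set i1 Uhat :: (real^('k + 'm)^('k + 'm)) set)}.
        ereal (c \<bullet> fst p + fst (snd p)))"

end

theory Submission
  imports Defs
begin

text \<open>Written blockwise, the matrix \<open>\<lambda> g\<^sub>1g\<^sub>1\<^sup>T - G(x)/2 + H(Y)/2\<close> has top-left block
  \<open>e\<^sub>1\<alpha>\<^sup>T + \<alpha>e\<^sub>1\<^sup>T\<close> with \<open>\<alpha> = (\<lambda>e\<^sub>1 - Y\<^sup>Td)/2\<close>, lower-left rows
  \<open>(BY - F + Axe\<^sub>1\<^sup>T)\<^sub>r/2\<close> and zero lower-right block. Since \<open>Uhat\<close> is a cone whose
  slice \<open>U = {u \<in> Uhat. u\<^sub>1 = 1}\<close> is bounded, membership in the dual cone can be tested on
  \<open>U\<close>, where \<open>u\<^sub>1 = 1\<close>: there \<open>\<alpha> \<in> Uhat\<^sup>*\<close> says \<open>d\<^sup>TYu \<le> \<lambda>\<close> and the row conditions say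
  \<open>Ax + BYu \<ge> Fu\<close>. Hence the IA problem is the epigraph form of the affine one, and the
  values agree because the supremum over the compact set \<open>U\<close> is attained.\<close>

lemma unit_vec_eq_axis: "unit_vec i = axis i 1"
  by (simp add: unit_vec_def axis_def)

lemma inner_unit_vec_left [simp]: "unit_vec i \<bullet> u = u $ i"
  by (simp add: unit_vec_eq_axis inner_commute[of "axis i 1"] inner_axis)

lemma Useg_bounded_imp_coord_zero_eq_0:
  fixes K :: "(real^'k::finite) set"
  assumes K: "convex K" "cone K" and slice: "Useg i1 K \<noteq> {}" "bounded (Useg i1 K)"
    and u: "u \<in> K" "u $ i1 = 0"
  shows "u = 0"
proof (rule ccontr)
  assume "u \<noteq> 0"
  then have norm_u: "norm u > 0" by simp
  obtain u0 where u0: "u0 \<in> Useg i1 K" using slice(1) by blast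
  obtain M where M: "\<And>v. v \<in> Useg i1 K \<Longrightarrow> norm v \<le> M"
    using slice(2) by (auto simp: bounded_iff)
  define t where "t = (M + norm u0 + 1) / norm u"
  have "M + norm u0 + 1 > 0" using M[OF u0] norm_ge_zero[of u0] by linarith
  then have t: "t \<ge> 0" "norm (t *\<^sub>R u) = M + norm u0 + 1"
    using norm_u by (simp_all add: t_def)
  \<comment> \<open>the ray u0 + t u stays in the slice, which is bounded\<close>
  have "u0 + t *\<^sub>R u \<in> Useg i1 K"
    using u0 u t(1) K convex_cone[of K] by (auto simp: Useg_def)
  then have "norm (u0 + t *\<^sub>R u) \<le> M" by (rule M)
  moreover have "norm (t *\<^sub>R u) \<le> norm (u0 + t *\<^sub>R u) + norm u0"
    using norm_triangle_ineq4[of "u0 + t *\<^sub>R u" u0] by simp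
  ultimately show False using t(2) by linarith
qed

lemma dual_cone_iff_Useg:
  fixes K :: "(real^'k::finite) set"
  assumes K: "convex K" "cone K" and slice: "Useg i1 K \<noteq> {}" "bounded (Useg i1 K)"
    and pos: "\<forall>u\<in>K. 0 \<le> u $ i1"
  shows "a \<in> dual_cone K \<longleftrightarrow> (\<forall>u\<in>Useg i1 K. 0 \<le> a \<bullet> u)"
proof
  assume "\<forall>u\<in>Useg i1 K. 0 \<le> a \<bullet> u"
  moreover have "0 \<le> a \<bullet> u" if "u \<in> K" "0 < u $ i1" "\<forall>v\<in>Useg i1 K. 0 \<le> a \<bullet> v" for u
  proof -
    have "(1 / u $ i1) *\<^sub>R u \<in> Useg i1 K"
      using that K by (simp add: Useg_def cone_def)
    then have "0 \<le> (1 / u $ i1) * (a \<bullet> u)" using that(3) by fastforce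
    then show ?thesis using that(2) by (simp add: zero_le_divide_iff)
  qed
  ultimately show "a \<in> dual_cone K"
    using pos Useg_bounded_imp_coord_zero_eq_0[OF K slice]
    by (force simp: dual_cone_def order.order_iff_strict)
qed (auto simp: dual_cone_def Useg_def)

lemma outer_vec_unit_vec_sym_cancel:
  fixes a b :: "real^'k::finite"
  assumes "outer_vec (unit_vec i) a + outer_vec a (unit_vec i)
         = outer_vec (unit_vec i) b + outer_vec b (unit_vec i)"
  shows "a = b"
proof (rule vec_eq_iff[THEN iffD2, rule_format])
  fix j
  have "(outer_vec (unit_vec i) a + outer_vec a (unit_vec i)) $ i $ j
      = (outer_vec (unit_vec i) b + outer_vec b (unit_vec i)) $ i $ j"
    using assms by simp
  then show "a $ j = b $ j"
    by (cases "j = i") (simp_all add: outer_vec_def unit_vec_def)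
qed

lemma IA_lhs_blocks:
  fixes A :: "real^'n1^'m::finite" and B :: "real^'n2^'m" and d :: "real^'n2"
    and F :: "real^'k::finite^'m" and Y :: "real^'k^'n2"
  assumes S: "S = lam *\<^sub>R g1g1T i1 - (1/2) *\<^sub>R G_mat i1 A F x + (1/2) *\<^sub>R H_mat i1 B d Y"
  defines "\<alpha> \<equiv> (1/2) *\<^sub>R (lam *\<^sub>R unit_vec i1 - d v* Y)"
  shows "transpose S = S"
    and "S $ Inl i $ Inl j = (outer_vec (unit_vec i1) \<alpha> + outer_vec \<alpha> (unit_vec i1)) $ i $ j"
    and "(\<chi> j. S $ Inr r $ Inl j) = (1/2) *\<^sub>R ((B ** Y) $ r - F $ r + (A *v x) $ r *\<^sub>R unit_vec i1)"
    and "S $ Inr r $ Inr s = 0"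
proof -
  have "S $ q $ p = S $ p $ q" for p q
    unfolding S by (cases p; cases q) (simp_all add: g1g1T_def G_mat_def H_mat_def outer_vec_def)
  then show "transpose S = S" by (simp add: transpose_def vec_eq_iff)
  show "S $ Inl i $ Inl j = (outer_vec (unit_vec i1) \<alpha> + outer_vec \<alpha> (unit_vec i1)) $ i $ j"
    unfolding S \<alpha>_def
    by (simp add: g1g1T_def G_mat_def H_mat_def outer_vec_def unit_vec_def algebra_simps)
  show "(\<chi> j. S $ Inr r $ Inl j) = (1/2) *\<^sub>R ((B ** Y) $ r - F $ r + (A *v x) $ r *\<^sub>R unit_vec i1)"
    unfolding S
    by (simp add: vec_eq_iff g1g1T_def G_mat_def H_mat_def outer_vec_def unit_vec_def algebra_simps)
  show "S $ Inr r $ Inr s = 0"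
    unfolding S by (simp add: g1g1T_def G_mat_def H_mat_def)
qed

lemma IA_lhs_mem_IA_set_iff:
  fixes A :: "real^'n1^'m::finite" and B :: "real^'n2^'m" and d :: "real^'n2"
    and F :: "real^'k::finite^'m" and Y :: "real^'k^'n2" and Uhat :: "(real^'k) set"
  assumes U: "convex Uhat" "cone Uhat" "Useg i1 Uhat \<noteq> {}" "bounded (Useg i1 Uhat)"
      "\<forall>u\<in>Uhat. 0 \<le> u $ i1"
  shows "lam *\<^sub>R g1g1T i1 - (1/2) *\<^sub>R G_mat i1 A F x + (1/2) *\<^sub>R H_mat i1 B d Y
           \<in> (IA_set i1 Uhat :: (real^('k + 'm)^('k + 'm)) set)
     \<longleftrightarrow> (\<forall>u\<in>Useg i1 Uhat. F *v u \<le> A *v x + B *v (Y *v u))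
        \<and> (\<forall>u\<in>Useg i1 Uhat. d \<bullet> (Y *v u) \<le> lam)"
    (is "_ \<longleftrightarrow> ?rows \<and> ?epi")
proof -
  define \<alpha> where "\<alpha> = (1/2) *\<^sub>R (lam *\<^sub>R unit_vec i1 - d v* Y)"
  define row where "row r = (1/2) *\<^sub>R ((B ** Y) $ r - F $ r + (A *v x) $ r *\<^sub>R unit_vec i1)" for r
  have alpha_inner: "\<alpha> \<bullet> u = (1/2) * (lam * u $ i1 - d \<bullet> (Y *v u))" for u
    by (simp add: \<alpha>_def inner_diff_left dot_lmul_matrix)
  have alpha_dual: "\<alpha> \<in> dual_cone Uhat \<longleftrightarrow> ?epi"
    by (auto simp add: dual_cone_iff_Useg[OF U] alpha_inner Useg_def)
  have row_inner: "row r \<bullet> u = (1/2) * ((B *v (Y *v u)) $ r - (F *v u) $ r + (A *v x) $ r * u $ i1)"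
    for r u
    using matrix_vector_mul_component[of "B ** Y" u r]
    by (simp add: row_def inner_add_left inner_diff_left matrix_vector_mul_component
        matrix_vector_mul_assoc)
  have rows_dual: "(\<forall>r. row r \<in> dual_cone Uhat) \<longleftrightarrow> ?rows"
    unfolding dual_cone_iff_Useg[OF U] row_inner
    by (auto simp: less_eq_vec_def Useg_def; smt (verit))
  have alpha_unique: "\<beta> = \<alpha>"
    if "\<forall>i j. (outer_vec (unit_vec i1) \<alpha> + outer_vec \<alpha> (unit_vec i1)) $ i $ j
           = (outer_vec (unit_vec i1) \<beta> + outer_vec \<beta> (unit_vec i1)) $ i $ j" for \<beta>
    using that by (intro outer_vec_unit_vec_sym_cancel[of i1]) (simp add: vec_eq_iff)
  show ?thesis
    unfolding IA_set_def mem_Collect_eq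
      IA_lhs_blocks[OF refl, of lam i1 A F x B d Y, folded \<alpha>_def row_def]
    using alpha_dual rows_dual alpha_unique by auto
qed

lemma INF_epigraph_eq_INF_SUP:
  fixes g :: "'a \<Rightarrow> real" and f :: "'b \<Rightarrow> 'u \<Rightarrow> real"
  assumes max_attained: "\<And>x Y. (x, Y) \<in> Q \<Longrightarrow> \<exists>u0\<in>U. \<forall>u\<in>U. f Y u \<le> f Y u0"
  shows "(INF p \<in> {(x, lam, Y). (x, Y) \<in> Q \<and> (\<forall>u\<in>U. f Y u \<le> lam)}.
            ereal (g (fst p) + fst (snd p)))
       = (INF p \<in> Q. ereal (g (fst p)) + (SUP u\<in>U. ereal (f (snd p) u)))"
    (is "?epi = ?minmax")
proof (rule antisym)
  show "?epi \<le> ?minmax"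
  proof (rule INF_greatest)
    fix p assume "p \<in> Q"
    then obtain x Y where p: "p = (x, Y)" "(x, Y) \<in> Q" by (cases p) auto
    then obtain u0 where u0: "u0 \<in> U" "\<forall>u\<in>U. f Y u \<le> f Y u0"
      using max_attained by blast
    have "?epi \<le> ereal (g x + f Y u0)"
      using p u0 by (intro INF_lower2[of "(x, f Y u0, Y)"]) auto
    also have "\<dots> \<le> ereal (g x) + (SUP u\<in>U. ereal (f Y u))"
      unfolding plus_ereal.simps(1)[symmetric] using u0(1) by (intro add_left_mono SUP_upper)
    finally show "?epi \<le> ereal (g (fst p)) + (SUP u\<in>U. ereal (f (snd p) u))"
      using p by simp
  qed
  show "?minmax \<le> ?epi"
  proof (rule INF_greatest)
    fix p assume "p \<in> {(x, lam, Y). (x, Y) \<in> Q \<and> (\<forall>u\<in>U. f Y u \<le> lam)}"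
    then obtain x lam Y where p: "p = (x, lam, Y)" "(x, Y) \<in> Q" "\<forall>u\<in>U. f Y u \<le> lam"
      by auto
    have "?minmax \<le> ereal (g x) + (SUP u\<in>U. ereal (f Y u))"
      using p by (intro INF_lower2[of "(x, Y)"]) auto
    also have "\<dots> \<le> ereal (g x) + ereal lam"
      using p(3) by (intro add_left_mono SUP_least) auto
    finally show "?minmax \<le> ereal (g (fst p) + fst (snd p))"
      using p(1) by simp
  qed
qed

theorem theorem2:
  fixes A :: "real^'n1^'m" and B :: "real^'n2^'m" and c :: "real^'n1" and d :: "real^'n2"
    and F :: "real^'k^'m" and X :: "(real^'n1) set" and Uhat :: "(real^'k) set"
    and i1 :: 'k
  assumes X_closed: "closed X" and X_convex: "convex X"
    and U_closed: "closed Uhat" and U_convex: "convex Uhat" and U_cone: "cone Uhat"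
    and U_fulldim: "interior Uhat \<noteq> {}"
    and U_pos: "\<forall>u\<in>Uhat. 0 \<le> u $ i1"
    and Useg_ne: "Useg i1 Uhat \<noteq> {}" and Useg_compact: "compact (Useg i1 Uhat)"
    and A2: "RLP_feasible i1 A B F X Uhat"
    and A3: "\<bar>v_RLP i1 A B c d F X Uhat\<bar> \<noteq> \<infinity>"
  shows "v_IA i1 A B c d F X Uhat = v_Aff i1 A B c d F X Uhat"
proof -
  let ?U = "Useg i1 Uhat"
  let ?Q = "{(x, Y::real^'k^'n2). x \<in> X \<and> (\<forall>u\<in>?U. A *v x + B *v (Y *v u) \<ge> F *v u)}"
  note IA_iff = IA_lhs_mem_IA_set_iff[OF U_convex U_cone Useg_ne
      compact_imp_bounded[OF Useg_compact] U_pos, where 'm='m]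
  have max_attained: "\<exists>u0\<in>?U. \<forall>u\<in>?U. d \<bullet> (Y *v u) \<le> d \<bullet> (Y *v u0)" for Y :: "real^'k^'n2"
    by (intro continuous_attains_sup Useg_compact Useg_ne continuous_intros)
  have "v_IA i1 A B c d F X Uhat
      = (INF p \<in> {(x, lam, Y). (x, Y) \<in> ?Q \<and> (\<forall>u\<in>?U. d \<bullet> (Y *v u) \<le> lam)}.
           ereal (c \<bullet> fst p + fst (snd p)))"
    unfolding v_IA_def by (simp add: IA_iff conj_assoc)
  also have "\<dots> = v_Aff i1 A B c d F X Uhat"
    unfolding v_Aff_def using max_attained by (rule INF_epigraph_eq_INF_SUP)
  finally show ?thesis .
qed

end
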